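(* Let $\mathcal{X}\subseteq\mathbb{R}^d$ be nonempty, closed and convex, and let $f:\mathbb{R}^d\to\mathbb{R}$ be differentiable (not necessarily convex) and $L$-smooth on an open set containing $\mathcal{X}$; assume $f_\star=\min_{x\in\mathcal{X}}f(x)$ is attained. Fix $\gamma\in(0,1/L]$ and define $G_\gamma(x):=\frac1\gamma\big(x-\Pi_{\mathcal{X}}(x-\gamma\nabla f(x))\big)$, where $\Pi_{\mathcal{X}}$ is the Euclidean projection onto $\mathcal{X}$. Let $x_0\in\mathcal{X}$ and $x_{k+1}\in\operatorname{arg\,min}_{z\in\mathcal{X}\cap\mathcal{B}(x_k,t_k)}\langle\nabla f(x_k),z\rangle$ with $t_k:=\gamma\|G_\gamma(x_k)\|$. Then for every $k\ge0$, $f(x_{k+1})\le f(x_k)-\frac\gamma2\|G_\gamma(x_k)\|^2$, and for every $K\ge1$, $$\min_{0\le k\le K-1}\|G_\gamma(x_k)\|^2\le\frac{2(f(x_0)-f_\star)}{\gamma K}.$$ In particular, for $\gamma=1/L$, $\min_{0\le k\le K-1}\|G_{1/L}(x_k)\|^2\le\frac{2L(f(x_0)-f_\star)}{K}$.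
   Context: $\|\cdot\|$ is the Euclidean norm, $\mathcal{B}(x,t):=\{y:\|y-x\|\le t\}$; $L$-smooth means $\nabla f$ is $L$-Lipschitz. *)

theory Defs
  imports "HOL-Analysis.Analysis"
begin

definition grad_map :: "'a::euclidean_space set \<Rightarrow> ('a \<Rightarrow> 'a) \<Rightarrow> real \<Rightarrow> 'a \<Rightarrow> 'a" where
  "grad_map X g \<gamma> x = (1 / \<gamma>) *\<^sub>R (x - closest_point X (x - \<gamma> *\<^sub>R g x))"

end

theory Submission
  imports Defs
begin

text \<open>Write \<open>G = G\<^sub>\<gamma>(x)\<close>. The projected gradient step \<open>p = x - \<gamma>G\<close> lies in the trust region
  \<open>X \<inter> B(x, \<gamma>\<parallel>G\<parallel>)\<close>, so the minimiser of the linearisation over that region decreases it at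
  least as much as \<open>p\<close> does; the variational inequality of the projection gives
  \<open>\<langle>\<nabla>f(x), G\<rangle> \<ge> \<parallel>G\<parallel>\<^sup>2\<close>, so the linear term is at most \<open>-\<gamma>\<parallel>G\<parallel>\<^sup>2\<close>. The quadratic
  upper bound from \<open>L\<close>-smoothness adds at most \<open>L\<gamma>\<^sup>2\<parallel>G\<parallel>\<^sup>2/2 \<le> \<gamma>\<parallel>G\<parallel>\<^sup>2/2\<close>, which gives the
  sufficient decrease. Telescoping it and bounding the minimum by the average gives the rate.\<close>

lemma lipschitz_gradient_quadratic_upper_bound:
  fixes f :: "'a::real_inner \<Rightarrow> real" and g :: "'a \<Rightarrow> 'a"
  assumes der: "\<And>y. (f has_derivative (\<lambda>h. g y \<bullet> h)) (at y)"
    and lip: "\<And>y z. y \<in> U \<Longrightarrow> z \<in> U \<Longrightarrow> norm (g y - g z) \<le> L * norm (y - z)"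
    and seg: "closed_segment a b \<subseteq> U"
  shows "f b \<le> f a + g a \<bullet> (b - a) + L / 2 * (norm (b - a))\<^sup>2"
proof -
  define d where "d = b - a"
  define h where "h = (\<lambda>s. f (a + s *\<^sub>R d) - s * (g a \<bullet> d) - L / 2 * s\<^sup>2 * (norm d)\<^sup>2)"
  define h' where "h' = (\<lambda>s. (g (a + s *\<^sub>R d) - g a) \<bullet> d - L * s * (norm d)\<^sup>2)"
  have "DERIV h s :> h' s" for s
  proof -
    have "((\<lambda>s. f (a + s *\<^sub>R d)) has_derivative (\<lambda>t. g (a + s *\<^sub>R d) \<bullet> (t *\<^sub>R d))) (at s)"
      by (rule has_derivative_compose[OF _ der]) (auto intro!: derivative_eq_intros)
    then have "((\<lambda>s. f (a + s *\<^sub>R d)) has_field_derivative (g (a + s *\<^sub>R d) \<bullet> d)) (at s)"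
      unfolding has_field_derivative_def by (rule has_derivative_eq_rhs) (simp add: fun_eq_iff)
    then show ?thesis
      unfolding h_def h'_def
      by (auto intro!: derivative_eq_intros simp: power2_eq_square algebra_simps inner_diff_left)
  qed
  then obtain s where s: "0 < s" "s < 1" "h 1 - h 0 = h' s"
    using MVT2[of 0 1 h h'] by auto
  have "a \<in> U"
    using seg by auto
  moreover have "a + s *\<^sub>R d \<in> U"
    using s seg unfolding closed_segment_def d_def
    by (auto intro!: exI[of _ s] simp: algebra_simps)
  ultimately
  have "norm (g (a + s *\<^sub>R d) - g a) \<le> L * (s * norm d)"
    using lip s by fastforce
  then have "norm (g (a + s *\<^sub>R d) - g a) * norm d \<le> L * (s * norm d) * norm d"
    by (simp add: mult_right_mono)
  with norm_cauchy_schwarz[of "g (a + s *\<^sub>R d) - g a" d]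
  have "(g (a + s *\<^sub>R d) - g a) \<bullet> d \<le> L * s * (norm d)\<^sup>2"
    by (simp add: power2_eq_square mult_ac)
  then have "h 1 \<le> h 0"
    using s unfolding h'_def by simp
  then show ?thesis
    unfolding h_def d_def by simp
qed

lemma closest_point_gradient_step:
  assumes "\<gamma> > 0"
  shows "closest_point X (y - \<gamma> *\<^sub>R g y) = y - \<gamma> *\<^sub>R grad_map X g \<gamma> y"
  using assms by (simp add: grad_map_def)

lemma grad_map_norm_sq_le_inner:
  assumes "closed X" "convex X" "y \<in> X" "\<gamma> > 0"
  shows "(norm (grad_map X g \<gamma> y))\<^sup>2 \<le> g y \<bullet> grad_map X g \<gamma> y"
proof -
  define G where "G = grad_map X g \<gamma> y"
  define p where "p = closest_point X (y - \<gamma> *\<^sub>R g y)"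
  have "y - p = \<gamma> *\<^sub>R G"
    using \<open>\<gamma> > 0\<close> by (simp add: G_def p_def closest_point_gradient_step)
  moreover have "((y - \<gamma> *\<^sub>R g y) - p) \<bullet> (y - p) \<le> 0"
    unfolding p_def by (rule closest_point_dot[OF assms(2,1,3)])
  ultimately have "(\<gamma> *\<^sub>R G - \<gamma> *\<^sub>R g y) \<bullet> (\<gamma> *\<^sub>R G) \<le> 0"
    by (simp add: algebra_simps)
  then have "\<gamma> * \<gamma> * (G \<bullet> G - g y \<bullet> G) \<le> 0"
    by (simp add: inner_diff_left algebra_simps)
  then show ?thesis
    using \<open>\<gamma> > 0\<close> by (simp add: G_def mult_le_0_iff power2_norm_eq_inner)
qed

lemma closest_point_in_trust_region:
  assumes "closed X" "X \<noteq> {}" "\<gamma> > 0"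
  shows "closest_point X (y - \<gamma> *\<^sub>R g y) \<in> X \<inter> cball y (\<gamma> * norm (grad_map X g \<gamma> y))"
proof -
  have "dist y (closest_point X (y - \<gamma> *\<^sub>R g y)) = \<gamma> * norm (grad_map X g \<gamma> y)"
    using assms(3) by (simp add: closest_point_gradient_step dist_norm)
  then show ?thesis
    using closest_point_in_set[OF assms(1,2)] by simp
qed

lemma trust_region_step_linear_decrease:
  assumes "closed X" "convex X" "y \<in> X" "\<gamma> > 0"
    and "\<And>z. z \<in> X \<inter> cball y (\<gamma> * norm (grad_map X g \<gamma> y)) \<Longrightarrow> g y \<bullet> y' \<le> g y \<bullet> z"
  shows "g y \<bullet> (y' - y) \<le> - \<gamma> * (norm (grad_map X g \<gamma> y))\<^sup>2"
proof -
  define G where "G = grad_map X g \<gamma> y"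
  have "g y \<bullet> y' \<le> g y \<bullet> closest_point X (y - \<gamma> *\<^sub>R g y)"
    using assms closest_point_in_trust_region[of X \<gamma> y g] by blast
  also have "closest_point X (y - \<gamma> *\<^sub>R g y) = y - \<gamma> *\<^sub>R G"
    unfolding G_def by (rule closest_point_gradient_step[OF \<open>\<gamma> > 0\<close>])
  finally have "g y \<bullet> (y' - y) \<le> - \<gamma> * (g y \<bullet> G)"
    by (simp add: inner_diff_right)
  also have "\<dots> \<le> - \<gamma> * (norm G)\<^sup>2"
    using grad_map_norm_sq_le_inner[OF assms(1-4)] \<open>\<gamma> > 0\<close> by (simp add: G_def)
  finally show ?thesis
    by (simp add: G_def)
qed

lemma trust_region_step_sufficient_decrease:
  fixes f :: "'a::euclidean_space \<Rightarrow> real"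
  assumes "closed X" "convex X" "X \<subseteq> U" "y \<in> X"
    and "\<And>y. (f has_derivative (\<lambda>h. g y \<bullet> h)) (at y)"
    and "\<And>y z. y \<in> U \<Longrightarrow> z \<in> U \<Longrightarrow> norm (g y - g z) \<le> L * norm (y - z)"
    and "L > 0" "\<gamma> > 0" "\<gamma> \<le> 1 / L"
    and y': "y' \<in> X \<inter> cball y (\<gamma> * norm (grad_map X g \<gamma> y))"
    and "\<And>z. z \<in> X \<inter> cball y (\<gamma> * norm (grad_map X g \<gamma> y)) \<Longrightarrow> g y \<bullet> y' \<le> g y \<bullet> z"
  shows "f y' \<le> f y - \<gamma> / 2 * (norm (grad_map X g \<gamma> y))\<^sup>2"
proof -
  define G where "G = grad_map X g \<gamma> y"
  have "closed_segment y y' \<subseteq> U"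
    using closed_segment_subset[of y X y'] assms(2-4) y' by blast
  then have "f y' \<le> f y + g y \<bullet> (y' - y) + L / 2 * (norm (y' - y))\<^sup>2"
    using lipschitz_gradient_quadratic_upper_bound[OF assms(5,6)] by blast
  moreover have "g y \<bullet> (y' - y) \<le> - \<gamma> * (norm G)\<^sup>2"
    unfolding G_def by (rule trust_region_step_linear_decrease[OF assms(1,2,4,8)]) (fact assms(11))
  moreover have "L / 2 * (norm (y' - y))\<^sup>2 \<le> \<gamma> / 2 * (norm G)\<^sup>2"
  proof -
    have "norm (y' - y) \<le> \<gamma> * norm G"
      using y' by (simp add: G_def dist_norm norm_minus_commute)
    then have "L / 2 * (norm (y' - y))\<^sup>2 \<le> L / 2 * (\<gamma> * norm G)\<^sup>2"
      using \<open>L > 0\<close> by (simp add: power_mono)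
    also have "\<dots> = (L * \<gamma>) * (\<gamma> / 2 * (norm G)\<^sup>2)"
      by (simp add: power2_eq_square)
    also have "\<dots> \<le> \<gamma> / 2 * (norm G)\<^sup>2"
      using \<open>L > 0\<close> \<open>\<gamma> > 0\<close> \<open>\<gamma> \<le> 1 / L\<close>
      by (intro mult_left_le_one_le) (auto simp: field_simps)
    finally show ?thesis .
  qed
  ultimately show ?thesis
    by (simp add: G_def)
qed

lemma Min_le_of_sufficient_decrease:
  fixes a u :: "nat \<Rightarrow> real"
  assumes "c > 0" "K \<ge> 1"
    and decrease: "\<And>k. u (Suc k) \<le> u k - c * a k"
    and lower: "\<And>k. m \<le> u k"
  shows "Min (a ` {0..K-1}) \<le> (u 0 - m) / (c * real K)"
proof -
  define \<mu> where "\<mu> = Min (a ` {0..K-1})"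
  have "{0..K-1} = {..<K}"
    using \<open>K \<ge> 1\<close> by auto
  then have "\<mu> \<le> a k" if "k < K" for k
    using that unfolding \<mu>_def by (intro Min_le) auto
  then have "c * (real K * \<mu>) \<le> c * (\<Sum>k<K. a k)"
    using sum_mono[of "{..<K}" "\<lambda>_. \<mu>" a] \<open>c > 0\<close> by simp
  also have "\<dots> \<le> u 0 - u K"
  proof (induction K)
    case (Suc n)
    then show ?case
      using decrease[of n] by (simp add: distrib_left)
  qed simp
  also have "\<dots> \<le> u 0 - m"
    using lower[of K] by simp
  finally show ?thesis
    using \<open>c > 0\<close> \<open>K \<ge> 1\<close> by (simp add: \<mu>_def pos_le_divide_eq mult_ac)
qed

theorem theorem9:
  fixes X U :: "'a::euclidean_space set" and f :: "'a \<Rightarrow> real" and g :: "'a \<Rightarrow> 'a"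
    and L \<gamma> :: real and x :: "nat \<Rightarrow> 'a" and xstar :: 'a
  assumes "X \<noteq> {}" and "closed X" and "convex X"
    and "\<And>y. (f has_derivative (\<lambda>h. g y \<bullet> h)) (at y)"
    and "open U" and "X \<subseteq> U"
    and "\<And>y z. y \<in> U \<Longrightarrow> z \<in> U \<Longrightarrow> norm (g y - g z) \<le> L * norm (y - z)"
    and "L > 0"
    and "xstar \<in> X" and "\<And>y. y \<in> X \<Longrightarrow> f xstar \<le> f y"
    and "0 < \<gamma>" and "\<gamma> \<le> 1 / L"
    and "x 0 \<in> X"
    and "\<And>k. x (Suc k) \<in> X \<inter> cball (x k) (\<gamma> * norm (grad_map X g \<gamma> (x k)))"
    and "\<And>k z. z \<in> X \<inter> cball (x k) (\<gamma> * norm (grad_map X g \<gamma> (x k)))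
               \<Longrightarrow> g (x k) \<bullet> x (Suc k) \<le> g (x k) \<bullet> z"
  shows "(\<forall>k. f (x (Suc k)) \<le> f (x k) - \<gamma> / 2 * (norm (grad_map X g \<gamma> (x k)))\<^sup>2)
       \<and> (\<forall>K::nat. K \<ge> 1 \<longrightarrow>
            Min ((\<lambda>k. (norm (grad_map X g \<gamma> (x k)))\<^sup>2) ` {0..K-1})
              \<le> 2 * (f (x 0) - f xstar) / (\<gamma> * real K))"
proof -
  have x_in_X: "x k \<in> X" for k
    using assms(13,14) by (cases k) auto
  have decrease: "f (x (Suc k)) \<le> f (x k) - \<gamma> / 2 * (norm (grad_map X g \<gamma> (x k)))\<^sup>2" for k
    using trust_region_step_sufficient_decrease[OF assms(2,3,6) x_in_X assms(4,7,8,11,12,14,15)] .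
  have "Min ((\<lambda>k. (norm (grad_map X g \<gamma> (x k)))\<^sup>2) ` {0..K-1})
          \<le> (f (x 0) - f xstar) / (\<gamma> / 2 * real K)" if "K \<ge> 1" for K
    using Min_le_of_sufficient_decrease[of "\<gamma> / 2" K "f \<circ> x"] decrease assms(10) x_in_X
      \<open>\<gamma> > 0\<close> that by simp
  then show ?thesis
    using decrease by (simp add: field_simps)
qed

end
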